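(* Let $G=(V,E)$ be an undirected graph with $n$ vertices, and let $\pi$ be a uniformly random ordering of $V$. Let $\ell>0$ and $d\le n$ be positive, and let $P$ be the $(\ell/d)$-prefix of $V$ with respect to $\pi$. Let $W$ be the lexicographically first maximal independent set of the induced subgraph $G[P]$ with respect to $\pi$. If $W$ and all of its neighbors $N_G(W)$ are removed from $G$, then with probability at least $1-n/e^{\ell}$ every remaining vertex has degree at most $d$ in the remaining graph $G[V\setminus (W\cup N_G(W))]$.
   Context: For a vertex set $U$, $N_G(U)$ is the set of all neighbors of vertices in $U$, and $G[U]$ is the subgraph induced by $U$. For an ordered vertex set $V$ and $0<\delta\le 1$, the $\delta$-prefix $P(V,\pi,\delta)$ is the set of the $\delta|V|$ earliest vertices of $V$ in the ordering $\pi$. The lexicographically first maximal independent set of a graph with respect to an ordering $\pi$ is the output of the sequential greedy algorithm: repeatedly take the first remaining vertex $v$ in the order $\pi$, add it to the set, and delete $v$ and all its neighbors, until no vertices remain. *)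

theory Defs
  imports Complex_Main "HOL-Combinatorics.Multiset_Permutations"
begin

text \<open>An ordering of V is a distinct list enumerating V (an element of
  permutations_of_set V); position in the list = rank in the ordering.\<close>

function greedy_mis :: "('a \<Rightarrow> 'a \<Rightarrow> bool) \<Rightarrow> 'a list \<Rightarrow> 'a set" where
  "greedy_mis E [] = {}"
| "greedy_mis E (v # vs) =
     insert v (greedy_mis E (filter (\<lambda>u. u \<noteq> v \<and> \<not> E v u) vs))"
  by pat_completeness auto
termination
  by (relation "measure (\<lambda>(E, xs). length xs)")
     (auto simp: le_imp_less_Suc length_filter_le)

definition prefix_set :: "'a list \<Rightarrow> real \<Rightarrow> 'a set" where
  "prefix_set \<sigma> \<delta> = set (take (nat \<lceil>\<delta> * real (length \<sigma>)\<rceil>) \<sigma>)"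

definition lfmis_prefix :: "('a \<Rightarrow> 'a \<Rightarrow> bool) \<Rightarrow> 'a list \<Rightarrow> real \<Rightarrow> 'a set" where
  "lfmis_prefix E \<sigma> \<delta> = greedy_mis E (take (nat \<lceil>\<delta> * real (length \<sigma>)\<rceil>) \<sigma>)"

definition nbhd :: "'a set \<Rightarrow> ('a \<Rightarrow> 'a \<Rightarrow> bool) \<Rightarrow> 'a set \<Rightarrow> 'a set" where
  "nbhd V E U = {u \<in> V. \<exists>w\<in>U. E w u}"

definition degree_in :: "('a \<Rightarrow> 'a \<Rightarrow> bool) \<Rightarrow> 'a set \<Rightarrow> 'a \<Rightarrow> nat" where
  "degree_in E R v = card {u \<in> R. E v u}"

end

theory Submission
  imports Defs
begin

text \<open>Fix a vertex \<open>v\<close>, reveal the ordering one vertex at a time and run the greedy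
  algorithm along the revealed prefix, keeping track of the removed vertices (those chosen
  and their neighbours). Every surviving vertex is still unrevealed, so while \<open>v\<close> survives
  with more than \<open>d\<close> surviving neighbours, the next revealed vertex is one of them with
  probability greater than \<open>d/n\<close>, and then \<open>v\<close> is removed. Hence \<open>v\<close> survives the
  \<open>(l/d)\<close>-prefix with degree above \<open>d\<close> with probability at most
  \<open>(1 - d/n)\<^bsup>ln/d\<^esup> \<le> e\<^bsup>-l\<^esup>\<close>, and a union bound over the \<open>n\<close> vertices
  finishes the proof. The conditioning is carried out by counting permutations.\<close>

text \<open>Unlike \<open>greedy_mis\<close>, the greedy algorithm is run without filtering the list: it keeps
  the set \<open>X\<close> of vertices deleted so far, so prefixes of an ordering are processed one vertex
  at a time.\<close>

fun greedy_removed :: "('a \<Rightarrow> 'a \<Rightarrow> bool) \<Rightarrow> 'a set \<Rightarrow> 'a list \<Rightarrow> 'a set" where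
  "greedy_removed E X [] = X"
| "greedy_removed E X (x # xs) =
     greedy_removed E (if x \<in> X then X else insert x (X \<union> {u. E x u})) xs"

lemma subset_greedy_removed: "X \<subseteq> greedy_removed E X xs"
  by (induction xs arbitrary: X) (simp, fastforce)

lemma greedy_removed_eq:
  "greedy_removed E X xs = X \<union> greedy_mis E (filter (\<lambda>u. u \<notin> X) xs)
     \<union> {u. \<exists>w\<in>greedy_mis E (filter (\<lambda>u. u \<notin> X) xs). E w u}"
proof (induction xs arbitrary: X)
  case Nil
  then show ?case by simp
next
  case (Cons x xs)
  show ?case
  proof (cases "x \<in> X")
    case True
    then show ?thesis using Cons by simp
  next
    case False
    let ?X' = "insert x (X \<union> {u. E x u})"
    have "filter (\<lambda>u. u \<noteq> x \<and> \<not> E x u) (filter (\<lambda>u. u \<notin> X) xs) = filter (\<lambda>u. u \<notin> ?X') xs"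
      by (auto intro!: filter_cong)
    then have "greedy_mis E (filter (\<lambda>u. u \<notin> X) (x # xs))
        = insert x (greedy_mis E (filter (\<lambda>u. u \<notin> ?X') xs))"
      using False by simp
    then show ?thesis using False Cons[of ?X'] by auto
  qed
qed

corollary lfmis_prefix_remainder:
  "V - (lfmis_prefix E \<sigma> \<delta> \<union> nbhd V E (lfmis_prefix E \<sigma> \<delta>))
     = V - greedy_removed E {} (take (nat \<lceil>\<delta> * real (length \<sigma>)\<rceil>) \<sigma>)"
  using greedy_removed_eq[of E "{}"] unfolding lfmis_prefix_def nbhd_def by auto

definition heavy_survivor :: "('a \<Rightarrow> 'a \<Rightarrow> bool) \<Rightarrow> 'a set \<Rightarrow> real \<Rightarrow> 'a \<Rightarrow> 'a set \<Rightarrow> bool" where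
  "heavy_survivor E V d v Y \<longleftrightarrow> v \<notin> Y \<and> d < real (card {u \<in> V - Y. E v u})"

lemma heavy_survivor_antimono:
  assumes "finite V" "heavy_survivor E V d v Y" "Y' \<subseteq> Y"
  shows "heavy_survivor E V d v Y'"
proof -
  have "card {u \<in> V - Y. E v u} \<le> card {u \<in> V - Y'. E v u}"
    by (rule card_mono) (use assms in auto)
  then show ?thesis using assms(2,3) unfolding heavy_survivor_def by auto
qed

lemma card_permutations_of_set_filter_le:
  assumes "finite S" "S \<noteq> {}"
  shows "card {\<sigma> \<in> permutations_of_set S. P \<sigma>}
         \<le> (\<Sum>x\<in>S. card {\<sigma> \<in> permutations_of_set (S - {x}). P (x # \<sigma>)})"
proof -
  have "{\<sigma> \<in> permutations_of_set S. P \<sigma>}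
      = (\<Union>x\<in>S. (#) x ` {\<sigma> \<in> permutations_of_set (S - {x}). P (x # \<sigma>)})"
    using permutations_of_set_nonempty[OF assms(2)] by auto
  also have "card \<dots> \<le> (\<Sum>x\<in>S. card ((#) x ` {\<sigma> \<in> permutations_of_set (S - {x}). P (x # \<sigma>)}))"
    by (rule card_UN_le) (fact assms(1))
  also have "\<dots> \<le> (\<Sum>x\<in>S. card {\<sigma> \<in> permutations_of_set (S - {x}). P (x # \<sigma>)})"
    by (intro sum_mono card_image_le) simp
  finally show ?thesis .
qed

lemma sum_outside_subset_le_fact_power:
  fixes d :: real
  assumes "finite S" "D \<subseteq> S" "d < real (card D)" "card S \<le> n" "0 < d" "d \<le> real n"
  shows "(\<Sum>x\<in>S. if x \<in> D then 0 else fact (card S - 1) * (1 - d / real n) ^ k)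
         \<le> fact (card S) * (1 - d / real n) ^ Suc k"
proof -
  let ?F = "fact (card S - 1) * (1 - d / real n) ^ k"
  have "card D \<le> card S" using assms(1,2) by (rule card_mono)
  have "0 < card D" "0 < n" using assms(3-5) \<open>card D \<le> card S\<close> by linarith+
  have "(\<Sum>x\<in>S. if x \<in> D then 0 else ?F) = (real (card S) - real (card D)) * ?F"
    using assms(1,2) \<open>card D \<le> card S\<close>
    by (simp add: sum.If_cases card_Diff_subset finite_subset flip: Diff_eq)
  also have "\<dots> \<le> real (card S) * (1 - d / real n) * ?F"
  proof (rule mult_right_mono)
    have "real (card S) * d / real n \<le> d"
      using assms(4,5) \<open>0 < n\<close> by (simp add: divide_le_eq mult_right_mono)
    then show "real (card S) - real (card D) \<le> real (card S) * (1 - d / real n)"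
      using assms(3) by (simp add: right_diff_distrib)
    show "0 \<le> ?F" using assms(6) \<open>0 < n\<close> by (simp add: divide_le_eq)
  qed
  also have "\<dots> = fact (card S) * (1 - d / real n) ^ Suc k"
    using \<open>0 < card D\<close> \<open>card D \<le> card S\<close> by (simp add: fact_reduce[of "card S"])
  finally show ?thesis .
qed

lemma one_minus_power_le_exp:
  fixes x :: real
  assumes "x \<le> 1"
  shows "(1 - x) ^ k \<le> exp (- (real k * x))"
proof -
  have "(1 - x) ^ k \<le> exp (- x) ^ k"
    using assms exp_ge_add_one_self[of "- x"] by (intro power_mono) auto
  then show ?thesis by (simp add: exp_of_nat_mult[symmetric])
qed

text \<open>\<open>S\<close> is the set of unrevealed vertices; \<open>V - X \<subseteq> S\<close> says that every vertex not yet
  removed is still unrevealed.\<close>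

lemma card_heavy_survivor_le:
  fixes d :: real
  assumes V: "finite V" "0 < d" "d \<le> real (card V)" and sym: "\<And>u w. E u w \<Longrightarrow> E w u"
  shows "finite S \<Longrightarrow> V - X \<subseteq> S \<Longrightarrow> card S \<le> card V \<Longrightarrow>
    real (card {\<sigma> \<in> permutations_of_set S. heavy_survivor E V d v (greedy_removed E X (take k \<sigma>))})
    \<le> fact (card S) * (1 - d / real (card V)) ^ k"
proof (induction k arbitrary: S X)
  case 0
  have "card {\<sigma> \<in> permutations_of_set S. heavy_survivor E V d v (greedy_removed E X (take 0 \<sigma>))}
      \<le> card (permutations_of_set S)"
    by (rule card_mono) auto
  then show ?case using "0.prems"(1) by simp (metis of_nat_fact of_nat_le_iff)
next
  case (Suc k)
  let ?q = "1 - d / real (card V)"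
  let ?A = "\<lambda>S X k. {\<sigma> \<in> permutations_of_set S. heavy_survivor E V d v (greedy_removed E X (take k \<sigma>))}"
  have q_nonneg: "0 \<le> ?q" using V(2,3) by (simp add: divide_le_eq)
  show ?case
  proof (cases "heavy_survivor E V d v X")
    case False
    have "?A S X (Suc k) = {}"
      using False heavy_survivor_antimono[OF V(1) _ subset_greedy_removed] by blast
    then show ?thesis using q_nonneg by (simp only: card.empty) simp
  next
    case True
    define D where "D = {u \<in> V - X. E v u}"
    have "d < real (card D)" using True unfolding heavy_survivor_def D_def by simp
    have "D \<subseteq> S" using Suc.prems(2) D_def by auto
    then have "S \<noteq> {}" using \<open>d < real (card D)\<close> V(2) by auto
    define F where "F = fact (card S - 1) * ?q ^ k"
    have bound: "real (card {\<sigma> \<in> permutations_of_set (S - {x}).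
        heavy_survivor E V d v (greedy_removed E X (take (Suc k) (x # \<sigma>)))})
      \<le> (if x \<in> D then 0 else F)" if "x \<in> S" for x
    proof (cases "x \<in> D")
      case True
      then have "x \<notin> X" "E x v" using D_def sym by auto
      \<comment> \<open>\<open>x\<close> is chosen by the greedy algorithm, which removes its neighbour \<open>v\<close>\<close>
      then have "v \<in> greedy_removed E X (take (Suc k) (x # \<sigma>))" for \<sigma>
        using subset_greedy_removed[of "insert x (X \<union> {u. E x u})" E "take k \<sigma>"] by auto
      then show ?thesis using True by (simp add: heavy_survivor_def)
    next
      case False
      let ?X' = "if x \<in> X then X else insert x (X \<union> {u. E x u})"
      have "V - ?X' \<subseteq> S - {x}" "card (S - {x}) \<le> card V"
        using Suc.prems \<open>x \<in> S\<close> by (auto simp: card_Diff_singleton)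
      then have "real (card (?A (S - {x}) ?X' k)) \<le> F"
        using Suc.IH[of "S - {x}" ?X'] Suc.prems(1) \<open>x \<in> S\<close>
        by (simp add: F_def card_Diff_singleton)
      then show ?thesis using False by simp
    qed
    have "real (card (?A S X (Suc k)))
        \<le> real (\<Sum>x\<in>S. card {\<sigma> \<in> permutations_of_set (S - {x}).
              heavy_survivor E V d v (greedy_removed E X (take (Suc k) (x # \<sigma>)))})"
      by (intro of_nat_mono card_permutations_of_set_filter_le Suc.prems(1) \<open>S \<noteq> {}\<close>)
    also have "\<dots> = (\<Sum>x\<in>S. real (card {\<sigma> \<in> permutations_of_set (S - {x}).
              heavy_survivor E V d v (greedy_removed E X (take (Suc k) (x # \<sigma>)))}))"
      by (rule of_nat_sum)
    also have "\<dots> \<le> (\<Sum>x\<in>S. if x \<in> D then 0 else F)"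
      by (rule sum_mono) (rule bound)
    also have "\<dots> \<le> fact (card S) * ?q ^ Suc k"
      unfolding F_def
      by (rule sum_outside_subset_le_fact_power) (use Suc.prems V(2,3) \<open>D \<subseteq> S\<close> \<open>d < real (card D)\<close> in auto)
    finally show ?thesis .
  qed
qed

lemma power_one_minus_ratio_le_exp:
  fixes d l :: real
  assumes "0 < d" "d \<le> real n"
  shows "(1 - d / real n) ^ nat \<lceil>l / d * real n\<rceil> \<le> exp (- l)"
proof -
  let ?k = "nat \<lceil>l / d * real n\<rceil>"
  have "l / d * real n \<le> real ?k" by linarith
  then have "l \<le> real ?k * (d / real n)" using assms by (simp add: field_simps)
  have "(1 - d / real n) ^ ?k \<le> exp (- (real ?k * (d / real n)))"
    by (rule one_minus_power_le_exp) (use assms in simp)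
  also have "\<dots> \<le> exp (- l)" using \<open>l \<le> real ?k * (d / real n)\<close> by simp
  finally show ?thesis .
qed

lemma card_filter_ge_union_bound:
  fixes c :: real
  assumes "finite A" "finite I" "{x \<in> A. \<not> P x} \<subseteq> (\<Union>i\<in>I. B i)"
    and "\<And>i. i \<in> I \<Longrightarrow> finite (B i)" "\<And>i. i \<in> I \<Longrightarrow> real (card (B i)) \<le> c"
  shows "real (card A) - real (card I) * c \<le> real (card {x \<in> A. P x})"
proof -
  have "{x \<in> A. P x} \<union> {x \<in> A. \<not> P x} = A" by blast
  moreover have "card ({x \<in> A. P x} \<union> {x \<in> A. \<not> P x}) = card {x \<in> A. P x} + card {x \<in> A. \<not> P x}"
    by (rule card_Un_disjoint) (use assms(1) in auto)
  ultimately have split: "real (card A) = real (card {x \<in> A. P x}) + real (card {x \<in> A. \<not> P x})"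
    by simp
  have "real (card {x \<in> A. \<not> P x}) \<le> real (card (\<Union>i\<in>I. B i))"
    by (intro of_nat_mono card_mono assms(3)) (use assms(2,4) in simp)
  also have "\<dots> \<le> real (\<Sum>i\<in>I. card (B i))"
    by (intro of_nat_mono card_UN_le assms(2))
  also have "\<dots> = (\<Sum>i\<in>I. real (card (B i)))"
    by (rule of_nat_sum)
  also have "\<dots> \<le> real (card I) * c"
    using sum_bounded_above[of I "\<lambda>i. real (card (B i))" c] assms(5) by simp
  finally show ?thesis using split by linarith
qed

theorem lemma1:
  fixes V :: "'a set" and E :: "'a \<Rightarrow> 'a \<Rightarrow> bool" and l d :: real
  assumes "finite V"
    and "\<And>u v. E u v \<Longrightarrow> u \<in> V \<and> v \<in> V"
    and "\<And>u v. E u v \<Longrightarrow> E v u"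
    and "\<And>v. \<not> E v v"
    and "l > 0" and "d > 0" and "d \<le> real (card V)"
  shows "real (card {\<sigma> \<in> permutations_of_set V.
            let W = lfmis_prefix E \<sigma> (l / d);
                R = V - (W \<union> nbhd V E W)
            in \<forall>v\<in>R. real (degree_in E R v) \<le> d})
         / real (card (permutations_of_set V))
         \<ge> 1 - real (card V) / exp l"
proof -
  define good where "good \<sigma> \<longleftrightarrow> (let W = lfmis_prefix E \<sigma> (l / d); R = V - (W \<union> nbhd V E W)
      in \<forall>v\<in>R. real (degree_in E R v) \<le> d)" for \<sigma>
  define n where "n = card V"
  define k where "k = nat \<lceil>l / d * real n\<rceil>"
  define bad where "bad v = {\<sigma> \<in> permutations_of_set V.
      heavy_survivor E V d v (greedy_removed E {} (take k \<sigma>))}" for v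
  have "real (card (bad v)) \<le> fact n * (1 - d / real n) ^ k" for v
    unfolding bad_def n_def by (rule card_heavy_survivor_le) (use assms in auto)
  also have "\<dots> \<le> fact n * exp (- l)"
    unfolding k_def using power_one_minus_ratio_le_exp assms(6,7) n_def by simp
  finally have bad_bound: "real (card (bad v)) \<le> fact n * exp (- l)" for v .
  have "{\<sigma> \<in> permutations_of_set V. \<not> good \<sigma>} \<subseteq> (\<Union>v\<in>V. bad v)"
  proof
    fix \<sigma> assume "\<sigma> \<in> {\<sigma> \<in> permutations_of_set V. \<not> good \<sigma>}"
    then have \<sigma>: "\<sigma> \<in> permutations_of_set V" "\<not> good \<sigma>" by simp_all
    then have "length \<sigma> = n" using length_finite_permutations_of_set n_def by blast
    let ?R = "V - greedy_removed E {} (take k \<sigma>)"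
    have "\<not> (\<forall>v\<in>?R. real (degree_in E ?R v) \<le> d)"
      using \<sigma>(2) unfolding good_def Let_def lfmis_prefix_remainder \<open>length \<sigma> = n\<close> k_def .
    then obtain v where "v \<in> ?R" "d < real (degree_in E ?R v)" by (auto simp: not_le)
    then show "\<sigma> \<in> (\<Union>v\<in>V. bad v)"
      using \<sigma>(1) unfolding bad_def heavy_survivor_def degree_in_def by auto
  qed
  from card_filter_ge_union_bound[OF _ assms(1) this _ bad_bound]
  have "fact n * (1 - real n * exp (- l)) \<le> real (card {\<sigma> \<in> permutations_of_set V. good \<sigma>})"
    using assms(1) by (simp add: bad_def n_def algebra_simps)
  then show ?thesis
    using assms(1) unfolding good_def
    by (simp add: n_def field_simps exp_minus)
qed

end
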